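(* Let $\nu\in\mathbb{N}$, let $(X,d)$ be a $\nu$-generalized metric space, and let $\{x_n\}_{n\in\mathbb{N}}$ be a sequence in $X$ whose terms are pairwise distinct and such that $d(x_n,x_{n+1})+d(x_n,x_{n+2})\to0$ as $n\to\infty$. Let $m:X\times X\to[0,\infty)$ be a function such that for any two subsequences $\{x_{p_i}\}$ and $\{x_{q_i}\}$ of $\{x_n\}$, $$\limsup_{i\to\infty} m(x_{p_i},x_{q_i})\le\limsup_{i\to\infty} d(x_{p_i},x_{q_i}).$$ Suppose that for every $\epsilon>0$ and any two subsequences $\{x_{p_i}\}$ and $\{x_{q_i}\}$, if $\limsup_{i\to\infty} m(x_{p_i},x_{q_i})\le\epsilon$, then there is $N$ such that $d(x_{p_i+1},x_{q_i+1})\le\epsilon$ for all $i\ge N$. Then $\{x_n\}$ is Cauchy.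
   Context: Let $X$ be a nonempty set, $d:X\times X\to[0,\infty)$, and $\nu\in\mathbb{N}$. $(X,d)$ is a $\nu$-generalized metric space if: (1) $d(x,y)=0$ iff $x=y$; (2) $d(x,y)=d(y,x)$ for all $x,y$; (3) $d(x,y)\le d(x,u_1)+d(u_1,u_2)+\dots+d(u_\nu,y)$ for every set $\{x,u_1,\dots,u_\nu,y\}$ of $\nu+2$ pairwise distinct elements of $X$. A sequence $\{x_n\}$ in $X$ is Cauchy if $\lim_{n\to\infty}\sup\{d(x_n,x_{n+1+m}): m\in\mathbb{Z}^+\}=0$, where $\mathbb{Z}^+$ denotes the nonnegative integers. A subsequence $\{x_{p_i}\}$ means $p_1<p_2<\cdots$ in $\mathbb{N}$. *)

theory Defs
  imports Complex_Main "HOL-Library.Extended_Real" "HOL-Library.Liminf_Limsup"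
begin

definition nu_gen_metric :: "nat \<Rightarrow> ('a \<Rightarrow> 'a \<Rightarrow> real) \<Rightarrow> bool" where
  "nu_gen_metric \<nu> d \<longleftrightarrow>
     (\<forall>x y. d x y \<ge> 0) \<and>
     (\<forall>x y. d x y = 0 \<longleftrightarrow> x = y) \<and>
     (\<forall>x y. d x y = d y x) \<and>
     (\<forall>u :: nat \<Rightarrow> 'a. inj_on u {0..Suc \<nu>} \<longrightarrow>
        d (u 0) (u (Suc \<nu>)) \<le> (\<Sum>i\<le>\<nu>. d (u i) (u (Suc i))))"

definition gen_cauchy :: "('a \<Rightarrow> 'a \<Rightarrow> real) \<Rightarrow> (nat \<Rightarrow> 'a) \<Rightarrow> bool" where
  "gen_cauchy d x \<longleftrightarrow>
     (\<lambda>n. SUP k. ereal (d (x n) (x (n + 1 + k)))) \<longlonglongrightarrow> 0"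

end

theory Submission
  imports Defs
begin

text \<open>First, d(x_n, x_{n+j}) \<rightarrow> 0 for every gap j: the \<nu>-polygon inequality along a
  path of pairwise distinct indices with steps 1, \<nu>+1 and \<nu>+2 reduces every gap to
  the gaps 1 and 2 given by hypothesis. Second, the hypotheses on m give a
  Meir--Keeler condition along the sequence: for every \<epsilon> > 0 there is \<delta> > 0 such
  that d(x_a, x_b) < \<epsilon> + \<delta> implies d(x_{a+1}, x_{b+1}) \<le> \<epsilon> for all large a, b;
  otherwise one extracts two subsequences violating it. Finally, by strong induction
  on K, d(x_a, x_{a+K}) < \<epsilon> + \<delta> for all large a: split off the first \<nu> unit
  steps, which together cost less than \<delta>, and bound the remaining distance
  d(x_{a+\<nu>}, x_{a+K}) by \<epsilon> using the Meir--Keeler condition and the induction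
  hypothesis for K - \<nu>.\<close>

lemma nu_gen_metric_nonneg: "nu_gen_metric \<nu> d \<Longrightarrow> 0 \<le> d a b"
  and nu_gen_metric_self: "nu_gen_metric \<nu> d \<Longrightarrow> d a a = 0"
  and nu_gen_metric_sym: "nu_gen_metric \<nu> d \<Longrightarrow> d a b = d b a"
  and nu_gen_metric_polygon: "nu_gen_metric \<nu> d \<Longrightarrow> inj_on u {0..Suc \<nu>} \<Longrightarrow>
         d (u 0) (u (Suc \<nu>)) \<le> (\<Sum>i\<le>\<nu>. d (u i) (u (Suc i)))"
  unfolding nu_gen_metric_def by blast+

lemma gen_cauchyI:
  assumes nonneg: "\<And>a b. 0 \<le> d a b"
    and bound: "\<And>e. 0 < e \<Longrightarrow> \<exists>M. \<forall>n\<ge>M. \<forall>k. d (x n) (x (n + 1 + k)) < e"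
  shows "gen_cauchy d x"
  unfolding gen_cauchy_def
proof (rule order_tendstoI)
  fix a :: ereal assume "a < 0"
  have "a < ereal (d (x n) (x (n + 1 + 0)))" for n
    using \<open>a < 0\<close> nonneg by (simp add: less_le_trans zero_ereal_def)
  also have "ereal (d (x n) (x (n + 1 + 0))) \<le> (SUP k. ereal (d (x n) (x (n + 1 + k))))" for n
    by (rule SUP_upper) simp
  finally show "\<forall>\<^sub>F n in sequentially. a < (SUP k. ereal (d (x n) (x (n + 1 + k))))"
    by simp
next
  fix a :: ereal assume "0 < a"
  then obtain e where e: "0 < ereal e" "ereal e < a"
    using ereal_dense2 by blast
  then obtain M where M: "\<forall>n\<ge>M. \<forall>k. d (x n) (x (n + 1 + k)) < e"
    using bound by auto
  have "(SUP k. ereal (d (x n) (x (n + 1 + k)))) \<le> ereal e" if "M \<le> n" for n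
    using M that by (auto intro!: SUP_least simp: less_imp_le)
  then show "\<forall>\<^sub>F n in sequentially. (SUP k. ereal (d (x n) (x (n + 1 + k)))) < a"
    using e(2) by (auto intro: eventually_sequentiallyI le_less_trans)
qed

locale nu_gen_metric_inj_seq =
  fixes \<nu> :: nat and d :: "'a \<Rightarrow> 'a \<Rightarrow> real" and x :: "nat \<Rightarrow> 'a"
  assumes gen_metric: "nu_gen_metric \<nu> d" and inj_seq: "inj x"
begin

lemmas nonneg = nu_gen_metric_nonneg[OF gen_metric]
  and sym = nu_gen_metric_sym[OF gen_metric]

lemma polygon_along_indices:
  assumes "inj_on w {0..Suc \<nu>}"
  shows "d (x (w 0)) (x (w (Suc \<nu>))) \<le> (\<Sum>i\<le>\<nu>. d (x (w i)) (x (w (Suc i))))"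
proof -
  have "inj_on (x \<circ> w) {0..Suc \<nu>}"
    using assms inj_seq by (simp add: comp_inj_on inj_on_subset)
  then show ?thesis
    using nu_gen_metric_polygon[OF gen_metric] by fastforce
qed

definition vanishing_gap :: "nat \<Rightarrow> bool" where
  "vanishing_gap g \<longleftrightarrow> (\<lambda>n. d (x n) (x (n + g))) \<longlonglongrightarrow> 0"

lemma vanishing_gap_0: "vanishing_gap 0"
  by (simp add: vanishing_gap_def nu_gen_metric_self[OF gen_metric])

lemma vanishing_gapI:
  assumes "(\<lambda>n. d (x (n + a)) (x (n + (a + g)))) \<longlonglongrightarrow> 0"
  shows "vanishing_gap g"
  unfolding vanishing_gap_def
  by (rule LIMSEQ_offset[where k = a]) (use assms in \<open>simp add: add.assoc\<close>)

text \<open>With truncated subtraction, at most one of the gaps b - a and a - b is nonzero.\<close>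
lemma tendsto_shifted_pair:
  assumes "vanishing_gap (b - a)" "vanishing_gap (a - b)"
  shows "(\<lambda>n. d (x (n + a)) (x (n + b))) \<longlonglongrightarrow> 0"
proof (cases "a \<le> b")
  case True
  with LIMSEQ_ignore_initial_segment[OF assms(1)[unfolded vanishing_gap_def], of a]
  show ?thesis by (simp add: add.assoc)
next
  case False
  with LIMSEQ_ignore_initial_segment[OF assms(2)[unfolded vanishing_gap_def], of b]
  show ?thesis by (simp add: add.assoc sym)
qed

lemma tendsto_along_path:
  assumes inj: "inj_on w {0..Suc \<nu>}"
    and steps: "\<And>i. i \<le> \<nu> \<Longrightarrow> vanishing_gap (w (Suc i) - w i) \<and> vanishing_gap (w i - w (Suc i))"
  shows "(\<lambda>n. d (x (n + w 0)) (x (n + w (Suc \<nu>)))) \<longlonglongrightarrow> 0"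
proof (rule tendsto_sandwich[OF _ _ tendsto_const])
  have inj_shift: "inj_on (\<lambda>i. n + w i) {0..Suc \<nu>}" for n
    using inj by (simp add: inj_on_def)
  show "\<forall>\<^sub>F n in sequentially.
      d (x (n + w 0)) (x (n + w (Suc \<nu>))) \<le> (\<Sum>i\<le>\<nu>. d (x (n + w i)) (x (n + w (Suc i))))"
    by (simp add: always_eventually polygon_along_indices[OF inj_shift])
  show "(\<lambda>n. \<Sum>i\<le>\<nu>. d (x (n + w i)) (x (n + w (Suc i)))) \<longlonglongrightarrow> 0"
    using steps by (intro tendsto_null_sum tendsto_shifted_pair) auto
qed (simp add: nonneg)

lemma vanishing_gap_beyond:
  assumes "vanishing_gap 1" "vanishing_gap (j - \<nu>)" "\<nu> < j"
  shows "vanishing_gap j"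
proof -
  define w where "w i = (if i \<le> \<nu> then i else j)" for i
  have "inj_on w {0..Suc \<nu>}"
    using \<open>\<nu> < j\<close> by (auto simp: inj_on_def w_def)
  moreover have "vanishing_gap (w (Suc i) - w i) \<and> vanishing_gap (w i - w (Suc i))" if "i \<le> \<nu>" for i
    using that assms by (cases "i < \<nu>") (auto simp: w_def vanishing_gap_0)
  ultimately have "(\<lambda>n. d (x (n + w 0)) (x (n + w (Suc \<nu>)))) \<longlonglongrightarrow> 0"
    by (rule tendsto_along_path)
  then have "(\<lambda>n. d (x (n + 0)) (x (n + (0 + j)))) \<longlonglongrightarrow> 0"
    by (simp add: w_def)
  then show ?thesis
    by (rule vanishing_gapI)
qed

text \<open>For 0 < j \<le> \<nu> the path of length \<nu> + 1 walks down from r to 0 in unit steps,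
  jumps to J and walks up again to J + \<nu> - r = r + j; the jump J \<in> {\<nu>+1, \<nu>+2} is
  chosen of the parity of \<nu> + j.\<close>
lemma vanishing_gap_within:
  assumes "vanishing_gap 1" "vanishing_gap (\<nu> + 1)" "vanishing_gap (\<nu> + 2)" "0 < j" "j \<le> \<nu>"
  shows "vanishing_gap j"
proof -
  obtain J r where J: "J = \<nu> + 1 \<or> J = \<nu> + 2" and r: "r \<le> \<nu>" "J + \<nu> = 2 * r + j"
  proof (cases "odd j")
    case True
    then obtain h where "j = 2 * h + 1"
      by (metis oddE)
    with assms(5) show thesis
      by (intro that[of "\<nu> + 1" "\<nu> - h"]) auto
  next
    case False
    then obtain h where "j = 2 * h"
      by blast
    with assms(4,5) show thesis
      by (intro that[of "\<nu> + 2" "\<nu> + 1 - h"]) auto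
  qed
  define w where "w i = (if i \<le> r then r - i else J + (i - Suc r))" for i
  have "r < J"
    using J r by auto
  then have "inj_on w {0..Suc \<nu>}"
    by (auto simp: inj_on_def w_def)
  moreover have "vanishing_gap (w (Suc i) - w i) \<and> vanishing_gap (w i - w (Suc i))" for i
  proof -
    have "w (Suc i) - w i \<in> {0, 1, J} \<and> w i - w (Suc i) \<in> {0, 1, J}"
      using \<open>r < J\<close> by (auto simp: w_def)
    then show ?thesis
      using assms J vanishing_gap_0 by auto
  qed
  ultimately have "(\<lambda>n. d (x (n + w 0)) (x (n + w (Suc \<nu>)))) \<longlonglongrightarrow> 0"
    by (rule tendsto_along_path)
  moreover have "w 0 = r" "w (Suc \<nu>) = r + j"
    using r by (auto simp: w_def)
  ultimately show ?thesis
    by (intro vanishing_gapI[of r]) simp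
qed

lemma vanishing_gap_1_2:
  assumes "(\<lambda>n. d (x n) (x (n + 1)) + d (x n) (x (n + 2))) \<longlonglongrightarrow> 0"
  shows "vanishing_gap 1" and "vanishing_gap 2"
proof -
  have "vanishing_gap g" if "g = 1 \<or> g = 2" for g
  proof -
    have "d (x n) (x (n + g)) \<le> d (x n) (x (n + 1)) + d (x n) (x (n + 2))" for n
      using that nonneg[of "x n"] by auto
    then show ?thesis
      unfolding vanishing_gap_def using nonneg
      by (intro tendsto_sandwich[OF _ _ tendsto_const assms] always_eventually allI) simp_all
  qed
  then show "vanishing_gap 1" "vanishing_gap 2"
    by simp_all
qed

lemma vanishing_gap_all:
  assumes "1 \<le> \<nu>" "vanishing_gap 1" "vanishing_gap 2"
  shows "vanishing_gap j"
proof (induction j rule: less_induct)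
  case (less j)
  have beyond: "vanishing_gap k" if "vanishing_gap (k - \<nu>)" "\<nu> < k" for k
    using vanishing_gap_beyond assms(2) that by blast
  show ?case
  proof (cases "\<nu> < j")
    case True
    then show ?thesis
      using beyond less.IH assms(1) by simp
  next
    case False
    moreover have "vanishing_gap (\<nu> + 1)" "vanishing_gap (\<nu> + 2)"
      using beyond assms(2,3) by simp_all
    ultimately show ?thesis
      using vanishing_gap_within vanishing_gap_0 assms(2) by (cases "j = 0") auto
  qed
qed

lemma polygon_split_first_steps:
  assumes "\<nu> < K"
  shows "d (x a) (x (a + K)) \<le> (\<Sum>i<\<nu>. d (x (a + i)) (x (a + Suc i))) + d (x (a + \<nu>)) (x (a + K))"
proof -
  define w where "w i = a + (if i \<le> \<nu> then i else K)" for i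
  have "inj_on w {0..Suc \<nu>}"
    using assms by (auto simp: inj_on_def w_def)
  then have "d (x (w 0)) (x (w (Suc \<nu>))) \<le> (\<Sum>i\<le>\<nu>. d (x (w i)) (x (w (Suc i))))"
    by (rule polygon_along_indices)
  also have "\<dots> = (\<Sum>i<\<nu>. d (x (w i)) (x (w (Suc i)))) + d (x (w \<nu>)) (x (w (Suc \<nu>)))"
    by (simp add: lessThan_Suc_atMost[symmetric])
  also have "(\<Sum>i<\<nu>. d (x (w i)) (x (w (Suc i)))) = (\<Sum>i<\<nu>. d (x (a + i)) (x (a + Suc i)))"
    by (rule sum.cong) (auto simp: w_def)
  finally show ?thesis
    by (simp add: w_def)
qed

lemma tail_bound_induction:
  assumes "1 \<le> \<nu>"
    and first_steps: "\<And>a. n0 \<le> a \<Longrightarrow> (\<Sum>i<\<nu>. d (x (a + i)) (x (a + Suc i))) < \<delta>"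
    and short: "\<And>a K. n0 \<le> a \<Longrightarrow> K \<le> \<nu> \<Longrightarrow> d (x a) (x (a + K)) < \<epsilon> + \<delta>"
    and step: "\<And>a b. n0 \<le> a \<Longrightarrow> n0 \<le> b \<Longrightarrow> d (x a) (x b) < \<epsilon> + \<delta> \<Longrightarrow>
                 d (x (a + 1)) (x (b + 1)) \<le> \<epsilon>"
    and "n0 \<le> a"
  shows "d (x a) (x (a + K)) < \<epsilon> + \<delta>"
  using assms(5)
proof (induction K arbitrary: a rule: less_induct)
  case (less K)
  show ?case
  proof (cases "K \<le> \<nu>")
    case True
    then show ?thesis
      using short less.prems by blast
  next
    case False
    define b where "b = a + (\<nu> - 1)"
    have "d (x b) (x (b + (K - \<nu>))) < \<epsilon> + \<delta>"
      using False less.prems \<open>1 \<le> \<nu>\<close> by (intro less.IH) (auto simp: b_def)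
    then have "d (x (b + 1)) (x (b + (K - \<nu>) + 1)) \<le> \<epsilon>"
      using less.prems by (intro step) (auto simp: b_def)
    moreover have "b + 1 = a + \<nu>" "b + (K - \<nu>) + 1 = a + K"
      using False \<open>1 \<le> \<nu>\<close> by (auto simp: b_def)
    ultimately have "d (x (a + \<nu>)) (x (a + K)) \<le> \<epsilon>"
      by metis
    with first_steps[OF less.prems(1)] polygon_split_first_steps[of K a] False show ?thesis
      by simp
  qed
qed

lemma gen_cauchy_if_meir_keeler:
  assumes "1 \<le> \<nu>" and gaps: "\<And>g. vanishing_gap g"
    and meir_keeler: "\<And>\<epsilon>. 0 < \<epsilon> \<Longrightarrow> \<exists>\<delta>>0. \<exists>N. \<forall>a b. N \<le> a \<longrightarrow> N \<le> b \<longrightarrow>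
                        d (x a) (x b) < \<epsilon> + \<delta> \<longrightarrow> d (x (a + 1)) (x (b + 1)) \<le> \<epsilon>"
  shows "gen_cauchy d x"
proof (rule gen_cauchyI[OF nonneg])
  fix e :: real assume "0 < e"
  then obtain \<delta> N where "0 < \<delta>" and step: "\<forall>a b. N \<le> a \<longrightarrow> N \<le> b \<longrightarrow>
      d (x a) (x b) < e/2 + \<delta> \<longrightarrow> d (x (a + 1)) (x (b + 1)) \<le> e/2"
    using meir_keeler[of "e/2"] by auto
  define \<delta>' where "\<delta>' = min \<delta> (e/2)"
  have "0 < \<delta>'"
    using \<open>0 < e\<close> \<open>0 < \<delta>\<close> by (simp add: \<delta>'_def)
  have "(\<lambda>a. \<Sum>i<\<nu>. d (x (a + i)) (x (a + i + 1))) \<longlonglongrightarrow> 0"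
    using gaps[of 1] unfolding vanishing_gap_def
    by (intro tendsto_null_sum LIMSEQ_ignore_initial_segment)
  then have "\<forall>\<^sub>F a in sequentially. (\<Sum>i<\<nu>. d (x (a + i)) (x (a + Suc i))) < \<delta>'"
    using \<open>0 < \<delta>'\<close> by (simp add: order_tendstoD(2))
  moreover have "\<forall>\<^sub>F a in sequentially. \<forall>K\<in>{..\<nu>}. d (x a) (x (a + K)) < e/2 + \<delta>'"
    using gaps \<open>0 < e\<close> \<open>0 < \<delta>'\<close> unfolding vanishing_gap_def
    by (intro eventually_ball_finite ballI order_tendstoD(2)) auto
  moreover have "\<forall>\<^sub>F a in sequentially. N \<le> a"
    by (rule eventually_ge_at_top)
  ultimately have "\<forall>\<^sub>F a in sequentially. (\<Sum>i<\<nu>. d (x (a + i)) (x (a + Suc i))) < \<delta>' \<and>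
      (\<forall>K\<in>{..\<nu>}. d (x a) (x (a + K)) < e/2 + \<delta>') \<and> N \<le> a"
    by (intro eventually_conj)
  then obtain n0 where n0: "\<And>a. n0 \<le> a \<Longrightarrow> (\<Sum>i<\<nu>. d (x (a + i)) (x (a + Suc i))) < \<delta>' \<and>
      (\<forall>K\<in>{..\<nu>}. d (x a) (x (a + K)) < e/2 + \<delta>') \<and> N \<le> a"
    unfolding eventually_sequentially by blast
  have step': "d (x (a + 1)) (x (b + 1)) \<le> e/2"
    if "n0 \<le> a" "n0 \<le> b" "d (x a) (x b) < e/2 + \<delta>'" for a b
    using step n0[OF that(1)] n0[OF that(2)] that(3) by (auto simp: \<delta>'_def)
  have "d (x n) (x (n + (1 + k))) < e/2 + \<delta>'" if "n0 \<le> n" for n k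
    using n0 by (intro tail_bound_induction[OF \<open>1 \<le> \<nu>\<close> _ _ step' that]) auto
  also have "e/2 + \<delta>' \<le> e"
    using \<open>0 < e\<close> by (simp add: \<delta>'_def)
  finally show "\<exists>M. \<forall>n\<ge>M. \<forall>k. d (x n) (x (n + 1 + k)) < e"
    by (auto simp: add.assoc)
qed

end

lemma common_strict_mono_reindexing:
  fixes A B :: "nat \<Rightarrow> nat"
  assumes "\<And>N. N \<le> A N" "\<And>N. N \<le> B N"
  obtains g where "strict_mono (A \<circ> g)" "strict_mono (B \<circ> g)" "\<And>i. i \<le> g i"
proof
  define g where "g = rec_nat 0 (\<lambda>_ N. max (A N) (B N) + 1)"
  have g_Suc: "g (Suc i) = max (A (g i)) (B (g i)) + 1" for i
    by (simp add: g_def)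
  have "A (g i) < A (g (Suc i))" "B (g i) < B (g (Suc i))" for i
    using assms[of "g (Suc i)"] g_Suc[of i] by linarith+
  then show "strict_mono (A \<circ> g)" "strict_mono (B \<circ> g)"
    unfolding strict_mono_Suc_iff by simp_all
  show "i \<le> g i" for i
  proof (induction i)
    case (Suc i)
    then show ?case
      using assms(1)[of "g i"] g_Suc[of i] by linarith
  qed simp
qed

lemma meir_keeler_from_limsup:
  fixes x :: "nat \<Rightarrow> 'a" and d m :: "'a \<Rightarrow> 'a \<Rightarrow> real"
  assumes m_le_d: "\<forall>p q. strict_mono p \<and> strict_mono q \<longrightarrow>
           limsup (\<lambda>i. ereal (m (x (p i)) (x (q i))))
             \<le> limsup (\<lambda>i. ereal (d (x (p i)) (x (q i))))"
    and m_step: "\<forall>\<epsilon>>0. \<forall>p q. strict_mono p \<and> strict_mono q \<and>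
           limsup (\<lambda>i. ereal (m (x (p i)) (x (q i)))) \<le> ereal \<epsilon> \<longrightarrow>
           (\<exists>N. \<forall>i\<ge>N. d (x (p i + 1)) (x (q i + 1)) \<le> \<epsilon>)"
    and "0 < \<epsilon>"
  shows "\<exists>\<delta>>0. \<exists>N. \<forall>a b. N \<le> a \<longrightarrow> N \<le> b \<longrightarrow> d (x a) (x b) < \<epsilon> + \<delta> \<longrightarrow>
           d (x (a + 1)) (x (b + 1)) \<le> \<epsilon>"
proof (rule ccontr)
  assume "\<not> ?thesis"
  then have "\<exists>a b. N \<le> a \<and> N \<le> b \<and> d (x a) (x b) < \<epsilon> + inverse (Suc N) \<and>
               \<epsilon> < d (x (a + 1)) (x (b + 1))" for N
    using positive_imp_inverse_positive[of "real (Suc N)"] by (auto simp: not_le)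
  then obtain A B where "\<And>N. N \<le> A N \<and> N \<le> B N \<and> d (x (A N)) (x (B N)) < \<epsilon> + inverse (Suc N) \<and>
                             \<epsilon> < d (x (A N + 1)) (x (B N + 1))"
    by metis
  then have AB: "\<And>N. N \<le> A N" "\<And>N. N \<le> B N"
      and close: "\<And>N. d (x (A N)) (x (B N)) < \<epsilon> + inverse (Suc N)"
      and far: "\<And>N. \<epsilon> < d (x (A N + 1)) (x (B N + 1))"
    by blast+
  obtain g where mono: "strict_mono (A \<circ> g)" "strict_mono (B \<circ> g)" and "\<And>i. i \<le> g i"
    using common_strict_mono_reindexing[OF AB] by blast
  have "limsup (\<lambda>i. ereal (d (x (A (g i))) (x (B (g i))))) \<le> limsup (\<lambda>i. ereal (\<epsilon> + inverse (Suc i)))"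
  proof (intro Limsup_mono always_eventually allI)
    fix i
    have "inverse (real (Suc (g i))) \<le> inverse (Suc i)"
      using \<open>i \<le> g i\<close> by (simp add: le_imp_inverse_le)
    with close[of "g i"] have "d (x (A (g i))) (x (B (g i))) \<le> \<epsilon> + inverse (Suc i)"
      by linarith
    then show "ereal (d (x (A (g i))) (x (B (g i)))) \<le> ereal (\<epsilon> + inverse (Suc i))"
      by simp
  qed
  also have "\<dots> = ereal \<epsilon>"
  proof (rule lim_imp_Limsup[OF trivial_limit_sequentially])
    have "(\<lambda>i. \<epsilon> + inverse (real (Suc i))) \<longlonglongrightarrow> \<epsilon> + 0"
      by (intro tendsto_add tendsto_const LIMSEQ_inverse_real_of_nat)
    then show "(\<lambda>i. ereal (\<epsilon> + inverse (Suc i))) \<longlonglongrightarrow> ereal \<epsilon>"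
      by (simp add: tendsto_ereal)
  qed
  finally have "limsup (\<lambda>i. ereal (d (x ((A \<circ> g) i)) (x ((B \<circ> g) i)))) \<le> ereal \<epsilon>"
    by simp
  then have "limsup (\<lambda>i. ereal (m (x ((A \<circ> g) i)) (x ((B \<circ> g) i)))) \<le> ereal \<epsilon>"
    using m_le_d mono order_trans by blast
  then obtain N where "\<forall>i\<ge>N. d (x ((A \<circ> g) i + 1)) (x ((B \<circ> g) i + 1)) \<le> \<epsilon>"
    using m_step \<open>0 < \<epsilon>\<close> mono by blast
  with far[of "g N"] show False
    by auto
qed

theorem theorem2p3:
  fixes \<nu> :: nat and d m :: "'a \<Rightarrow> 'a \<Rightarrow> real" and x :: "nat \<Rightarrow> 'a"
  assumes "\<nu> \<ge> 1"
    and "nu_gen_metric \<nu> d"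
    and "inj x"
    and "(\<lambda>n. d (x n) (x (n + 1)) + d (x n) (x (n + 2))) \<longlonglongrightarrow> 0"
    and "\<forall>a b. m a b \<ge> 0"
    and "\<forall>p q. strict_mono p \<and> strict_mono q \<longrightarrow>
           limsup (\<lambda>i. ereal (m (x (p i)) (x (q i))))
             \<le> limsup (\<lambda>i. ereal (d (x (p i)) (x (q i))))"
    and "\<forall>\<epsilon>>0. \<forall>p q. strict_mono p \<and> strict_mono q \<and>
           limsup (\<lambda>i. ereal (m (x (p i)) (x (q i)))) \<le> ereal \<epsilon> \<longrightarrow>
           (\<exists>N. \<forall>i\<ge>N. d (x (p i + 1)) (x (q i + 1)) \<le> \<epsilon>)"
  shows "gen_cauchy d x"
proof -
  interpret nu_gen_metric_inj_seq \<nu> d x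
    using assms(2,3) by unfold_locales
  have gaps: "vanishing_gap g" for g
    using vanishing_gap_all[OF assms(1) vanishing_gap_1_2[OF assms(4)]] .
  show ?thesis
    using meir_keeler_from_limsup[where x = x and m = m and d = d, OF assms(6,7)]
    by (rule gen_cauchy_if_meir_keeler[OF assms(1) gaps])
qed

end
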